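(* Let $H\in(0,1)$, $\delta\in(0,H)$, $\rho>0$, and let $B^H$ be a fractional Brownian motion on $[0,1]$ with Hurst index $H$. Let $n\ge N^*(\rho,\delta)$ and suppose that $\mathbf{B}^H_n$ satisfies the BCE condition. Then for every $m\ge1$ and $1\le k\le 2^{n+m-1}$, $$\Theta^+_n(m,k)\cdot\mathbf{1}\{\boldsymbol\beta^\top\boldsymbol\alpha_n(m,k)>\rho\ell_{n+m}\}\le 1\quad\text{and}\quad \Theta^-_n(m,k)\cdot\mathbf{1}\{\boldsymbol\beta^\top\boldsymbol\alpha_n(m,k)<-\rho\ell_{n+m}\}\le 1.$$
   Context: A fractional Brownian motion with Hurst index $H$ is a centered Gaussian process with $B^H(0)=0$ and covariance $\mathbb{E}[B^H(s)B^H(t)]=\tfrac12(|s|^{2H}+|t|^{2H}-|s-t|^{2H})$. $t^n_i=i/2^n$, $\ell_k=2^{-(H-\delta)k}$, $\mathbf{B}^H_n=(B^H(t^n_0),\dots,B^H(t^n_{2^n}))$. For $m\ge1$, $1\le k\le 2^{n+m-1}$: $\boldsymbol\alpha_n(m,k)=(B^H(t^{n+m}_{2k-2}),B^H(t^{n+m}_{2k-1}),B^H(t^{n+m}_{2k}))^\top$, $\boldsymbol\beta=(1/2,-1,1/2)^\top$, $\mu_n(m,k)=\boldsymbol\beta^\top\mathbb{E}[\boldsymbol\alpha_n(m,k)\mid\mathbf{B}^H_n]$. BCE condition: $|\mu_n(m,k)|\le \tfrac{\rho}{2}\ell_{n+m}$ for all $m\ge1$ and $1\le k\le 2^{n+m-1}$.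 $\Xi^{(m,k)}_n(\theta)=\mathbb{E}[\exp\{\theta\boldsymbol\beta^\top\boldsymbol\alpha_n(m,k)\}\mid\mathbf{B}^H_n]$. $Z_n=\sum_{m\ge1}2^{n+m}\exp\{-\tfrac{\rho^2}{8}2^{2(n+m)\delta}\}$, $g_n(m)=Z_n^{-1}2^{n+m}\exp\{-\tfrac{\rho^2}{8}2^{2(n+m)\delta}\}$, $N^*(\rho,\delta)=1+\sup\{n\ge1:Z_n>1\}$. $\theta^+_n(m)=\tfrac{\rho}{2}2^{(n+m)(H+\delta)}$, $\theta^-_n(m)=-\theta^+_n(m)$, and $\Theta^\pm_n(m,k)=g_n(m)^{-1}2^{n+m}\exp\{-\theta^\pm_n(m)\boldsymbol\beta^\top\boldsymbol\alpha_n(m,k)+\log\Xi^{(m,k)}_n(\theta^\pm_n(m))\}$. *)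

theory Defs
  imports "HOL-Probability.Probability"
begin

definition gaussian_rv :: "'a measure \<Rightarrow> ('a \<Rightarrow> real) \<Rightarrow> bool" where
  "gaussian_rv M X \<longleftrightarrow> X \<in> borel_measurable M \<and>
     ((\<exists>c. AE \<omega> in M. X \<omega> = c) \<or>
      (\<exists>\<mu> \<sigma>. \<sigma> > 0 \<and> distributed M lborel X (normal_density \<mu> \<sigma>)))"

definition fbm :: "'a measure \<Rightarrow> real \<Rightarrow> (real \<Rightarrow> 'a \<Rightarrow> real) \<Rightarrow> bool" where
  "fbm M H B \<longleftrightarrow> prob_space M \<and>
     (\<forall>t\<in>{0..1}. B t \<in> borel_measurable M) \<and>
     (AE \<omega> in M. B 0 \<omega> = 0) \<and>
     (\<forall>t\<in>{0..1}. integrable M (B t) \<and> integral\<^sup>L M (B t) = 0) \<and>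
     (\<forall>s\<in>{0..1}. \<forall>t\<in>{0..1}. integrable M (\<lambda>\<omega>. B s \<omega> * B t \<omega>) \<and>
        integral\<^sup>L M (\<lambda>\<omega>. B s \<omega> * B t \<omega>) =
          (\<bar>s\<bar> powr (2*H) + \<bar>t\<bar> powr (2*H) - \<bar>s - t\<bar> powr (2*H)) / 2) \<and>
     (\<forall>I c. finite I \<longrightarrow> I \<subseteq> {0..1} \<longrightarrow> gaussian_rv M (\<lambda>\<omega>. \<Sum>t\<in>I. c t * B t \<omega>))"

definition tgrid :: "nat \<Rightarrow> nat \<Rightarrow> real" where
  "tgrid n i = real i / 2 ^ n"

definition ell :: "real \<Rightarrow> real \<Rightarrow> nat \<Rightarrow> real" where
  "ell H \<delta> k = 2 powr (- (H - \<delta>) * real k)"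

definition gridF :: "'a measure \<Rightarrow> (real \<Rightarrow> 'a \<Rightarrow> real) \<Rightarrow> nat \<Rightarrow> 'a measure" where
  "gridF M B n = sigma (space M)
     {B (tgrid n i) -` A \<inter> space M | i A. i \<le> 2 ^ n \<and> A \<in> sets borel}"

definition balpha :: "(real \<Rightarrow> 'a \<Rightarrow> real) \<Rightarrow> nat \<Rightarrow> nat \<Rightarrow> nat \<Rightarrow> 'a \<Rightarrow> real" where
  "balpha B n m k \<omega> = (1/2) * B (tgrid (n+m) (2*k-2)) \<omega> - B (tgrid (n+m) (2*k-1)) \<omega>
      + (1/2) * B (tgrid (n+m) (2*k)) \<omega>"

definition mu :: "'a measure \<Rightarrow> (real \<Rightarrow> 'a \<Rightarrow> real) \<Rightarrow> nat \<Rightarrow> nat \<Rightarrow> nat \<Rightarrow> 'a \<Rightarrow> real" where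
  "mu M B n m k = (\<lambda>\<omega>. (1/2) * real_cond_exp M (gridF M B n) (B (tgrid (n+m) (2*k-2))) \<omega>
      - real_cond_exp M (gridF M B n) (B (tgrid (n+m) (2*k-1))) \<omega>
      + (1/2) * real_cond_exp M (gridF M B n) (B (tgrid (n+m) (2*k))) \<omega>)"

definition BCE :: "'a measure \<Rightarrow> (real \<Rightarrow> 'a \<Rightarrow> real) \<Rightarrow> real \<Rightarrow> real \<Rightarrow> real \<Rightarrow> nat \<Rightarrow> 'a \<Rightarrow> bool" where
  "BCE M B H \<delta> \<rho> n \<omega> \<longleftrightarrow>
     (\<forall>m k. 1 \<le> m \<longrightarrow> 1 \<le> k \<longrightarrow> k \<le> 2 ^ (n+m-1) \<longrightarrow>
        \<bar>mu M B n m k \<omega>\<bar> \<le> \<rho> / 2 * ell H \<delta> (n+m))"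

definition Xi :: "'a measure \<Rightarrow> (real \<Rightarrow> 'a \<Rightarrow> real) \<Rightarrow> nat \<Rightarrow> nat \<Rightarrow> nat \<Rightarrow> real \<Rightarrow> 'a \<Rightarrow> real" where
  "Xi M B n m k \<theta> = real_cond_exp M (gridF M B n) (\<lambda>\<omega>. exp (\<theta> * balpha B n m k \<omega>))"

definition zterm :: "real \<Rightarrow> real \<Rightarrow> nat \<Rightarrow> nat \<Rightarrow> real" where
  "zterm \<rho> \<delta> n m = 2 ^ (n+m) * exp (- (\<rho>^2 / 8) * 2 powr (2 * real (n+m) * \<delta>))"

definition Zn :: "real \<Rightarrow> real \<Rightarrow> nat \<Rightarrow> real" where
  "Zn \<rho> \<delta> n = (\<Sum>j. zterm \<rho> \<delta> n (Suc j))"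

definition gn :: "real \<Rightarrow> real \<Rightarrow> nat \<Rightarrow> nat \<Rightarrow> real" where
  "gn \<rho> \<delta> n m = zterm \<rho> \<delta> n m / Zn \<rho> \<delta> n"

text \<open>N^*(\<rho>,\<delta>) = 1 + sup{n \<ge> 1 : Z_n > 1} (sup of the empty set is 0).\<close>
definition Nstar :: "real \<Rightarrow> real \<Rightarrow> nat" where
  "Nstar \<rho> \<delta> = 1 + Sup {n. 1 \<le> n \<and> Zn \<rho> \<delta> n > 1}"

definition theta_plus :: "real \<Rightarrow> real \<Rightarrow> real \<Rightarrow> nat \<Rightarrow> nat \<Rightarrow> real" where
  "theta_plus H \<delta> \<rho> n m = \<rho> / 2 * 2 powr (real (n+m) * (H + \<delta>))"

definition theta_minus :: "real \<Rightarrow> real \<Rightarrow> real \<Rightarrow> nat \<Rightarrow> nat \<Rightarrow> real" where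
  "theta_minus H \<delta> \<rho> n m = - theta_plus H \<delta> \<rho> n m"

definition Theta :: "'a measure \<Rightarrow> (real \<Rightarrow> 'a \<Rightarrow> real) \<Rightarrow> real \<Rightarrow> real \<Rightarrow> nat \<Rightarrow> nat \<Rightarrow> nat \<Rightarrow> real \<Rightarrow> 'a \<Rightarrow> real" where
  "Theta M B \<rho> \<delta> n m k \<theta> \<omega> = inverse (gn \<rho> \<delta> n m) * 2 ^ (n+m) *
     exp (- \<theta> * balpha B n m k \<omega> + ln (Xi M B n m k \<theta> \<omega>))"

end

theory Submission
  imports Defs "HOL-Real_Asymp.Real_Asymp"
begin

(* Conditionally on the grid values B_n, the second difference beta' alpha_n(m,k) is Gaussian
   with mean mu_n(m,k) and variance at most 2^(-2H(n+m)).  To see this, split it into its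
   orthogonal projection onto the span of the grid values (with respect to the covariance) and
   a remainder uncorrelated with them.  Joint Gaussianity makes the characteristic function of
   the remainder and the grid values factorise, and Fourier uniqueness turns this into
   independence of the remainder from the grid sigma-algebra.  Hence
   Xi(theta) = exp(theta mu + theta^2 sigma^2 / 2).  On the event theta beta' alpha > theta+ rho l,
   the BCE condition and the choice of theta+ bound the exponent of Theta by
   -(rho^2/8) 2^(2(n+m)delta), which cancels the factor g_n(m)^-1 2^(n+m) = Z_n exp(...);
   finally Z_n <= 1 for n >= N*. *)

section \<open>Fourier uniqueness for weighted integrals\<close>

lemma
  fixes w Z :: "'a \<Rightarrow> real"
  assumes [measurable]: "Z \<in> borel_measurable M"
    and w: "integrable M w" "\<And>x. 0 \<le> w x" "(\<integral>x. w x \<partial>M) = c" and "0 < c"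
  shows real_distribution_normalized_density: "real_distribution (distr (density M (\<lambda>x. w x / c)) borel Z)"
    and char_normalized_density:
      "char (distr (density M (\<lambda>x. w x / c)) borel Z) s = (\<integral>x. w x *\<^sub>R iexp (s * Z x) \<partial>M) / c"
proof -
  have [measurable]: "w \<in> borel_measurable M" using w by auto
  have "emeasure (density M (\<lambda>x. w x / c)) (space M) = ennreal (\<integral>x. w x / c \<partial>M)"
    using w \<open>0 < c\<close> by (simp add: emeasure_density nn_integral_eq_integral)
  also have "\<dots> = 1" using w \<open>0 < c\<close> by simp
  finally have "prob_space (density M (\<lambda>x. w x / c))" by (intro prob_spaceI) simp
  then show "real_distribution (distr (density M (\<lambda>x. w x / c)) borel Z)"
    by (simp add: real_distribution_def real_distribution_axioms_def prob_space.prob_space_distr)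
  have "char (distr (density M (\<lambda>x. w x / c)) borel Z) s = (\<integral>x. (w x / c) *\<^sub>R iexp (s * Z x) \<partial>M)"
    unfolding char_def using w \<open>0 < c\<close> by (simp add: integral_distr integral_density)
  also have "\<dots> = (\<integral>x. (w x *\<^sub>R iexp (s * Z x)) / c \<partial>M)"
    by (simp add: scaleR_conv_of_real divide_inverse ac_simps)
  also have "\<dots> = (\<integral>x. w x *\<^sub>R iexp (s * Z x) \<partial>M) / c"
    by (rule integral_divide_zero)
  finally show "char (distr (density M (\<lambda>x. w x / c)) borel Z) s = \<dots>" .
qed

lemma distr_density_eq_if_fourier_eq:
  fixes u v Z :: "'a \<Rightarrow> real"
  assumes [measurable]: "Z \<in> borel_measurable M"
    and u: "integrable M u" "\<And>x. 0 \<le> u x" and v: "integrable M v" "\<And>x. 0 \<le> v x"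
    and fourier: "\<And>s. (\<integral>x. u x *\<^sub>R iexp (s * Z x) \<partial>M) = (\<integral>x. v x *\<^sub>R iexp (s * Z x) \<partial>M)"
  shows "distr (density M u) borel Z = distr (density M v) borel Z"
proof -
  have [measurable]: "u \<in> borel_measurable M" "v \<in> borel_measurable M"
    using u v by auto
  define c where "c = (\<integral>x. u x \<partial>M)"
  have c_v: "(\<integral>x. v x \<partial>M) = c"
    using fourier[of 0] by (simp add: c_def flip: of_real_def)
  have "0 \<le> c" unfolding c_def using u by auto
  show ?thesis
  proof (cases "c = 0")
    case True
    have "AE x in M. u x = 0" "AE x in M. v x = 0"
      using integral_nonneg_eq_0_iff_AE[of M u] integral_nonneg_eq_0_iff_AE[of M v] u v c_v True
      by (auto simp: c_def)
    then have "density M u = density M v"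
      by (intro density_cong) auto
    then show ?thesis by simp
  next
    case False
    with \<open>0 \<le> c\<close> have "0 < c" by simp
    have "distr (density M (\<lambda>x. u x / c)) borel Z = distr (density M (\<lambda>x. v x / c)) borel Z"
      using real_distribution_normalized_density[OF _ u c_def[symmetric] \<open>0 < c\<close>]
        real_distribution_normalized_density[OF _ v c_v \<open>0 < c\<close>]
        char_normalized_density[OF _ u c_def[symmetric] \<open>0 < c\<close>] char_normalized_density[OF _ v c_v \<open>0 < c\<close>]
        fourier
      by (intro Levy_uniqueness) auto
    moreover have "distr (density M w) borel Z = density (distr (density M (\<lambda>x. w x / c)) borel Z) (\<lambda>_. c)"
      if [measurable]: "w \<in> borel_measurable M" and "\<And>x. 0 \<le> w x" for w :: "'a \<Rightarrow> real"
    proof -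
      have "(\<lambda>x. ennreal (w x / c) * ennreal c) = (\<lambda>x. ennreal (w x))"
        using that \<open>0 < c\<close> by (simp add: ennreal_mult'[symmetric])
      then show ?thesis by (simp add: density_distr density_density_eq)
    qed
    ultimately show ?thesis using u v by simp
  qed
qed

lemma integral_weight_eq_0_if_fourier_eq_0:
  fixes D Z :: "'a \<Rightarrow> real" and f :: "real \<Rightarrow> real"
  assumes [measurable]: "Z \<in> borel_measurable M" "f \<in> borel_measurable borel"
    and D: "integrable M D" and fourier: "\<And>s. (\<integral>x. D x *\<^sub>R iexp (s * Z x) \<partial>M) = 0"
    and Df: "integrable M (\<lambda>x. D x * f (Z x))"
  shows "(\<integral>x. D x * f (Z x) \<partial>M) = 0"
proof -
  have [measurable]: "D \<in> borel_measurable M" using D by auto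
  define u where "u x = max (D x) 0" for x
  define v where "v x = max (- D x) 0" for x
  have [measurable]: "u \<in> borel_measurable M" "v \<in> borel_measurable M"
    unfolding u_def v_def by measurable
  have D_eq: "D x = u x - v x" for x by (simp add: u_def v_def max_def)
  have uv: "integrable M u" "integrable M v" "0 \<le> u x" "0 \<le> v x" for x
    using D unfolding u_def v_def by (auto intro!: integrable_max)
  have integrable_weighted: "integrable M (\<lambda>x. w x *\<^sub>R iexp (s * Z x))"
    if "integrable M w" for w s
    using that by (intro Bochner_Integration.integrable_bound[OF that]) (auto simp: norm_mult)
  have "(\<integral>x. u x *\<^sub>R iexp (s * Z x) \<partial>M) - (\<integral>x. v x *\<^sub>R iexp (s * Z x) \<partial>M) = 0" for s
    using fourier[of s] integrable_weighted[OF uv(1)] integrable_weighted[OF uv(2)]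
    by (simp add: D_eq scaleR_diff_left flip: Bochner_Integration.integral_diff)
  then have "distr (density M u) borel Z = distr (density M v) borel Z"
    by (intro distr_density_eq_if_fourier_eq uv) auto
  moreover have "(\<integral>x. w x * f (Z x) \<partial>M) = (\<integral>y. f y \<partial>distr (density M w) borel Z)"
    if [measurable]: "w \<in> borel_measurable M" and "\<And>x. 0 \<le> w x" for w
    using that by (simp add: integral_distr integral_density)
  ultimately have "(\<integral>x. u x * f (Z x) \<partial>M) = (\<integral>x. v x * f (Z x) \<partial>M)"
    using uv by simp
  moreover have "integrable M (\<lambda>x. u x * f (Z x))" "integrable M (\<lambda>x. v x * f (Z x))"
  proof -
    have "\<bar>u x * f (Z x)\<bar> \<le> \<bar>D x * f (Z x)\<bar>" "\<bar>v x * f (Z x)\<bar> \<le> \<bar>D x * f (Z x)\<bar>" for x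
      by (auto simp: u_def v_def abs_mult max_def mult_nonpos_nonneg)
    then show "integrable M (\<lambda>x. u x * f (Z x))" "integrable M (\<lambda>x. v x * f (Z x))"
      by (auto intro: Bochner_Integration.integrable_bound[OF Df])
  qed
  ultimately show ?thesis
    by (simp add: D_eq left_diff_distrib)
qed

lemma complex_integral_weight_eq_0_if_fourier_eq_0:
  fixes D :: "'a \<Rightarrow> complex" and Z :: "'a \<Rightarrow> real" and f :: "real \<Rightarrow> real"
  assumes [measurable]: "Z \<in> borel_measurable M" "f \<in> borel_measurable borel"
    and D: "integrable M D" and fourier: "\<And>s. (\<integral>x. D x * iexp (s * Z x) \<partial>M) = 0"
    and Df: "integrable M (\<lambda>x. D x * complex_of_real (f (Z x)))"
  shows "(\<integral>x. D x * complex_of_real (f (Z x)) \<partial>M) = 0"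
proof -
  have [measurable]: "D \<in> borel_measurable M" using D by auto
  have int_fourier: "integrable M (\<lambda>x. D x * iexp (s * Z x))" for s
    by (rule Bochner_Integration.integrable_bound[OF D]) (auto simp: norm_mult)
  \<comment> \<open>Conjugating the weight reflects the frequency, so the real and imaginary parts
    of the weight again have vanishing Fourier transform.\<close>
  have cnj_fourier: "cnj (D x * iexp (- s * Z x)) = cnj (D x) * iexp (s * Z x)" for s x
    by (simp add: exp_cnj)
  have Re_scaleR: "Re z *\<^sub>R w = (z * w + cnj z * w) / 2"
    and Im_scaleR: "Im z *\<^sub>R w = (z * w - cnj z * w) / (2 * \<i>)" for z w :: complex
  proof -
    have "z * w + cnj z * w = (z + cnj z) * w" "z * w - cnj z * w = (z - cnj z) * w"
      by (simp_all add: algebra_simps)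
    then show "Re z *\<^sub>R w = (z * w + cnj z * w) / 2" "Im z *\<^sub>R w = (z * w - cnj z * w) / (2 * \<i>)"
      by (simp_all add: complex_add_cnj complex_diff_cnj scaleR_conv_of_real field_simps)
  qed
  have parts: "(\<integral>x. Re (D x) *\<^sub>R iexp (s * Z x) \<partial>M)
      = (\<integral>x. (D x * iexp (s * Z x) + cnj (D x * iexp (- s * Z x))) / 2 \<partial>M)"
    "(\<integral>x. Im (D x) *\<^sub>R iexp (s * Z x) \<partial>M)
      = (\<integral>x. (D x * iexp (s * Z x) - cnj (D x * iexp (- s * Z x))) / (2 * \<i>) \<partial>M)" for s
    by (simp_all only: Re_scaleR Im_scaleR cnj_fourier)
  have vanish: "(\<integral>x. (D x * iexp (s * Z x) + cnj (D x * iexp (- s * Z x))) / 2 \<partial>M) = 0"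
    "(\<integral>x. (D x * iexp (s * Z x) - cnj (D x * iexp (- s * Z x))) / (2 * \<i>) \<partial>M) = 0" for s
    using int_fourier[of s] int_fourier[of "-s"] fourier[of s] fourier[of "-s"]
    by (simp_all only: integral_divide_zero)
       (subst Bochner_Integration.integral_add Bochner_Integration.integral_diff; simp del: complex_cnj_mult)+
  have "(\<integral>x. Re (D x) *\<^sub>R iexp (s * Z x) \<partial>M) = 0" "(\<integral>x. Im (D x) *\<^sub>R iexp (s * Z x) \<partial>M) = 0" for s
    using parts[of s] vanish[of s] by simp_all
  then have "(\<integral>x. Re (D x) * f (Z x) \<partial>M) = 0" "(\<integral>x. Im (D x) * f (Z x) \<partial>M) = 0"
    using integrable_Re[OF D] integrable_Im[OF D] integrable_Re[OF Df] integrable_Im[OF Df]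
    by (auto intro!: integral_weight_eq_0_if_fourier_eq_0[where Z=Z and f=f])
  then show ?thesis
    using integral_Re[OF Df] integral_Im[OF Df] by (simp add: complex_eq_iff)
qed

lemma complex_integral_weight_prod_indicator_eq_0:
  fixes D :: "'a \<Rightarrow> complex" and Z :: "nat \<Rightarrow> 'a \<Rightarrow> real" and A :: "nat \<Rightarrow> real set"
  assumes "\<And>j. j < d \<Longrightarrow> Z j \<in> borel_measurable M" and [measurable]: "\<And>j. A j \<in> sets borel"
    and "integrable M D" and "\<And>t. (\<integral>x. D x * iexp (\<Sum>j<d. t j * Z j x) \<partial>M) = 0"
  shows "(\<integral>x. D x * complex_of_real (\<Prod>j<d. indicator (A j) (Z j x)) \<partial>M) = 0"
  using assms(1,3,4)
proof (induction d arbitrary: D)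
  case 0
  then show ?case by simp
next
  case (Suc d)
  have [measurable]: "D \<in> borel_measurable M" using Suc.prems(2) by auto
  have [measurable]: "Z j \<in> borel_measurable M" if "j \<le> d" for j
    using Suc.prems(1) that by simp
  define P where "P x = (\<Prod>j<d. indicator (A j) (Z j x) :: real)" for x
  have [measurable]: "P \<in> borel_measurable M" unfolding P_def by (auto intro!: borel_measurable_prod)
  have P_bound: "\<bar>P x\<bar> \<le> 1" for x
    unfolding P_def by (auto intro!: prod_le_1 simp: abs_prod indicator_def)
  have integrable_bounded_mult: "integrable M (\<lambda>x. D x * g x)"
    if [measurable]: "g \<in> borel_measurable M" and "\<And>x. norm (g x) \<le> 1" for g
    by (rule Bochner_Integration.integrable_bound[OF Suc.prems(2)])
       (use that in \<open>auto simp: norm_mult intro!: mult_left_le\<close>)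
  have "(\<integral>x. D x * iexp (s * Z d x) * complex_of_real (P x) \<partial>M) = 0" for s
    unfolding P_def
  proof (rule Suc.IH)
    show "Z j \<in> borel_measurable M" if "j < d" for j using that by simp
    show "integrable M (\<lambda>x. D x * iexp (s * Z d x))"
      by (rule integrable_bounded_mult) auto
    fix t
    have "iexp (s * Z d x) * iexp (\<Sum>j<d. t j * Z j x) = iexp (\<Sum>j<Suc d. (t(d := s)) j * Z j x)" for x
      by (simp add: exp_add[symmetric] algebra_simps)
    then show "(\<integral>x. D x * iexp (s * Z d x) * iexp (\<Sum>j<d. t j * Z j x) \<partial>M) = 0"
      using Suc.prems(3)[of "t(d := s)"] by (simp add: mult.assoc)
  qed
  then have "(\<integral>x. D x * complex_of_real (P x) * complex_of_real (indicator (A d) (Z d x)) \<partial>M) = 0"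
  proof (intro complex_integral_weight_eq_0_if_fourier_eq_0[where Z="Z d" and f="indicator (A d)"])
    show "integrable M (\<lambda>x. D x * complex_of_real (P x))"
      "integrable M (\<lambda>x. D x * complex_of_real (P x) * complex_of_real (indicator (A d) (Z d x)))"
      using P_bound by (auto simp: mult.assoc intro!: integrable_bounded_mult simp: indicator_def)
  qed (auto simp: ac_simps)
  then show ?case by (simp add: P_def mult.assoc)
qed

lemma emeasure_eq_on_sigma_sets_generator:
  assumes "finite_measure N1" "finite_measure N2" "sets N1 = sets N2"
    and G: "Int_stable G" "G \<subseteq> sets N1" "space N1 \<in> G"
    and eq: "\<And>A. A \<in> G \<Longrightarrow> emeasure N1 A = emeasure N2 A"
    and S: "S \<in> sigma_sets (space N1) G"
  shows "emeasure N1 S = emeasure N2 S"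
proof -
  interpret N1: finite_measure N1 by fact
  interpret N2: finite_measure N2 by fact
  have sets: "sigma_sets (space N1) G \<subseteq> sets N1"
    using G by (intro sets.sigma_sets_subset) auto
  have space: "space N2 = space N1" using sets_eq_imp_space_eq \<open>sets N1 = sets N2\<close> by metis
  have "G \<subseteq> Pow (space N1)" using G(2) sets.sets_into_space by auto
  from G(1) this S show ?thesis
  proof (induction rule: sigma_sets_induct_disjoint)
    case (compl A)
    then show ?case
      using sets emeasure_compl[of A N1] emeasure_compl[of A N2] eq[OF G(3)] \<open>sets N1 = sets N2\<close> space
      by auto
  next
    case (union A)
    then show ?case
      using sets suminf_emeasure[of A N1] suminf_emeasure[of A N2] \<open>sets N1 = sets N2\<close> by auto
  qed (use eq in auto)
qed

section \<open>Conditional expectation given finitely many random variables\<close>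

abbreviation generated_sigma :: "'a measure \<Rightarrow> (nat \<Rightarrow> 'a \<Rightarrow> real) \<Rightarrow> nat \<Rightarrow> 'a measure" where
  "generated_sigma M V d \<equiv> sigma (space M) {V j -` A \<inter> space M | j A. j < d \<and> A \<in> sets borel}"

definition rectangles :: "'a measure \<Rightarrow> (nat \<Rightarrow> 'a \<Rightarrow> real) \<Rightarrow> nat \<Rightarrow> 'a set set" where
  "rectangles M V d = {{x \<in> space M. \<forall>j<d. V j x \<in> A j} | A. \<forall>j. A j \<in> sets borel}"

lemma rectangles_subset_sets:
  "(\<And>j. j < d \<Longrightarrow> V j \<in> borel_measurable M) \<Longrightarrow> rectangles M V d \<subseteq> sets M"
  unfolding rectangles_def by auto

lemma space_in_rectangles: "space M \<in> rectangles M V d"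
  unfolding rectangles_def by (intro CollectI exI[of _ "\<lambda>_. UNIV"]) auto

lemma Int_stable_rectangles: "Int_stable (rectangles M V d)"
proof (rule Int_stableI)
  fix S T assume "S \<in> rectangles M V d" "T \<in> rectangles M V d"
  then obtain A B where "\<forall>j. A j \<in> sets borel" "\<forall>j. B j \<in> sets borel"
    and "S = {x \<in> space M. \<forall>j<d. V j x \<in> A j}" "T = {x \<in> space M. \<forall>j<d. V j x \<in> B j}"
    unfolding rectangles_def by blast
  then show "S \<inter> T \<in> rectangles M V d"
    unfolding rectangles_def by (intro CollectI exI[of _ "\<lambda>j. A j \<inter> B j"]) auto
qed

lemma generators_subset_rectangles:
  "{V j -` A \<inter> space M | j A. j < d \<and> A \<in> sets borel} \<subseteq> rectangles M V d"
proof
  fix S assume "S \<in> {V j -` A \<inter> space M | j A. j < d \<and> A \<in> sets borel}"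
  then obtain j B where "j < d" "B \<in> sets borel" "S = V j -` B \<inter> space M"
    by blast
  then show "S \<in> rectangles M V d"
    unfolding rectangles_def by (intro CollectI exI[of _ "\<lambda>i. if i = j then B else UNIV"]) auto
qed

lemma measurable_generated_sigma:
  assumes "j < d"
  shows "V j \<in> borel_measurable (generated_sigma M V d)"
proof (rule measurableI)
  fix A :: "real set" assume "A \<in> sets borel"
  then have "V j -` A \<inter> space M \<in> {V j -` A \<inter> space M | j A. j < d \<and> A \<in> sets borel}"
    using assms by blast
  then show "V j -` A \<inter> space (generated_sigma M V d) \<in> sets (generated_sigma M V d)"
    by (auto simp: sets_measure_of_conv)
qed (simp add: space_measure_of_conv)

lemma sets_generated_sigma_subset_sigma_rectangles:
  assumes "S \<in> sets (generated_sigma M V d)"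
  shows "S \<in> sigma_sets (space M) (rectangles M V d)"
proof -
  have "{V j -` A \<inter> space M | j A. j < d \<and> A \<in> sets borel} \<subseteq> Pow (space M)"
    by auto
  then have "S \<in> sigma_sets (space M) {V j -` A \<inter> space M | j A. j < d \<and> A \<in> sets borel}"
    using assms by (simp add: sets_measure_of_conv)
  then show ?thesis
    using sigma_sets_mono'[OF generators_subset_rectangles[where V=V and d=d and M=M]] by blast
qed

lemma (in prob_space) sigma_finite_subalgebra_generated_sigma:
  assumes "\<And>j. j < d \<Longrightarrow> V j \<in> borel_measurable M"
  shows "sigma_finite_subalgebra M (generated_sigma M V d)"
proof (rule finite_measure_subalgebra_is_sigma_finite)
  have gen: "{V j -` A \<inter> space M | j A. j < d \<and> A \<in> sets borel} \<subseteq> sets M"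
    using assms by auto
  then have "{V j -` A \<inter> space M | j A. j < d \<and> A \<in> sets borel} \<subseteq> Pow (space M)"
    using sets.sets_into_space by auto
  with sets.sigma_sets_subset[OF gen] have "subalgebra M (generated_sigma M V d)"
    by (auto simp: subalgebra_def sets_measure_of_conv)
  then show "finite_measure_subalgebra M (generated_sigma M V d)"
    by (simp add: finite_measure_subalgebra_def finite_measure_subalgebra_axioms_def finite_measure_axioms)
qed

lemma (in prob_space) integral_mult_iexp_eq_if_char_factorizes:
  fixes R L :: "'a \<Rightarrow> real" and f :: "real \<Rightarrow> real"
  assumes [measurable]: "R \<in> borel_measurable M" "L \<in> borel_measurable M" "f \<in> borel_measurable borel"
    and char: "\<And>s. expectation (\<lambda>x. iexp (s * R x + L x)) = expectation (\<lambda>x. iexp (s * R x)) * expectation (\<lambda>x. iexp (L x))"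
    and f_int: "integrable M (\<lambda>x. f (R x))"
  shows "(\<integral>x. complex_of_real (f (R x)) * iexp (L x) \<partial>M) = expectation (\<lambda>x. f (R x)) * expectation (\<lambda>x. iexp (L x))"
proof -
  have int_iexp: "integrable M (\<lambda>x. iexp (g x))" if "g \<in> borel_measurable M" for g
    using that by (intro integrable_iexp) auto
  \<comment> \<open>The centred weight iexp L - E iexp L is orthogonal to every iexp (s R), hence to f R.\<close>
  define D where "D x = iexp (L x) - expectation (\<lambda>x. iexp (L x))" for x
  have D_int: "integrable M D" unfolding D_def by (auto intro!: int_iexp)
  have D_bound: "norm (D x) \<le> 2" for x
    unfolding D_def using norm_triangle_ineq4[of "iexp (L x)" "expectation (\<lambda>x. iexp (L x))"]
      integral_norm_bound[of M "\<lambda>x. iexp (L x)"] by (simp add: prob_space)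
  have "(\<integral>x. D x * complex_of_real (f (R x)) \<partial>M) = 0"
  proof (rule complex_integral_weight_eq_0_if_fourier_eq_0[where Z=R and f=f, OF _ _ D_int])
    fix s
    have "(\<integral>x. D x * iexp (s * R x) \<partial>M)
        = expectation (\<lambda>x. iexp (s * R x + L x)) - expectation (\<lambda>x. iexp (L x)) * expectation (\<lambda>x. iexp (s * R x))"
      unfolding D_def using int_iexp[of "\<lambda>x. s * R x + L x"] int_iexp[of "\<lambda>x. s * R x"]
      by (simp add: left_diff_distrib distrib_left exp_add[symmetric] algebra_simps)
    then show "(\<integral>x. D x * iexp (s * R x) \<partial>M) = 0"
      using char[of s] by simp
    show "integrable M (\<lambda>x. D x * complex_of_real (f (R x)))"
      by (rule Bochner_Integration.integrable_bound[where f="\<lambda>x. 2 * \<bar>f (R x)\<bar>"])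
         (use D_int f_int D_bound in \<open>auto simp: norm_mult intro!: mult_right_mono\<close>)
  qed simp_all
  moreover have "integrable M (\<lambda>x. complex_of_real (f (R x)) * iexp (L x))"
    by (rule Bochner_Integration.integrable_bound[where f="\<lambda>x. \<bar>f (R x)\<bar>"])
       (use f_int in \<open>auto simp: norm_mult\<close>)
  ultimately show ?thesis
    using f_int by (simp add: D_def right_diff_distrib mult.commute)
qed

lemma (in prob_space) integral_indicator_rectangle_eq_if_char_factorizes:
  fixes R :: "'a \<Rightarrow> real" and V :: "nat \<Rightarrow> 'a \<Rightarrow> real" and f :: "real \<Rightarrow> real"
  assumes [measurable]: "R \<in> borel_measurable M" "f \<in> borel_measurable borel"
    and V: "\<And>j. j < d \<Longrightarrow> V j \<in> borel_measurable M"
    and char: "\<And>s t. expectation (\<lambda>x. iexp (s * R x + (\<Sum>j<d. t j * V j x)))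
                 = expectation (\<lambda>x. iexp (s * R x)) * expectation (\<lambda>x. iexp (\<Sum>j<d. t j * V j x))"
    and f_int: "integrable M (\<lambda>x. f (R x))"
    and S: "S \<in> rectangles M V d"
  shows "(\<integral>x. f (R x) * indicator S x \<partial>M) = expectation (\<lambda>x. f (R x)) * prob S"
proof -
  define c where "c = expectation (\<lambda>x. f (R x))"
  obtain A where A: "\<And>j. A j \<in> sets borel" and S_eq: "S = {x \<in> space M. \<forall>j<d. V j x \<in> A j}"
    using S unfolding rectangles_def by blast
  have [measurable]: "S \<in> sets M" using S rectangles_subset_sets[where V=V and d=d and M=M, OF V] by auto
  have L_meas[measurable]: "(\<lambda>x. \<Sum>j<d. t j * V j x) \<in> borel_measurable M" for t
    using V by (auto intro!: borel_measurable_sum)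
  have "(\<integral>x. complex_of_real (f (R x) - c) * complex_of_real (\<Prod>j<d. indicator (A j) (V j x)) \<partial>M) = 0"
  proof (rule complex_integral_weight_prod_indicator_eq_0[OF V A])
    show "integrable M (\<lambda>x. complex_of_real (f (R x) - c))" using f_int by auto
    fix t
    have "(\<lambda>x. complex_of_real (f (R x)) * iexp (\<Sum>j<d. t j * V j x)) \<in> borel_measurable M"
      by measurable
    then have "integrable M (\<lambda>x. complex_of_real (f (R x)) * iexp (\<Sum>j<d. t j * V j x))"
      by (rule Bochner_Integration.integrable_bound[OF f_int]) (auto simp: norm_mult)
    moreover have "integrable M (\<lambda>x. iexp (\<Sum>j<d. t j * V j x))"
      by (rule integrable_iexp) (measurable, auto intro: V)
    ultimately show "(\<integral>x. complex_of_real (f (R x) - c) * iexp (\<Sum>j<d. t j * V j x) \<partial>M) = 0"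
      using integral_mult_iexp_eq_if_char_factorizes[OF _ L_meas _ char f_int]
      by (simp add: left_diff_distrib c_def)
  qed
  moreover have "(\<Prod>j<d. indicator (A j) (V j x)) = (indicator S x :: real)" if "x \<in> space M" for x
    using that by (auto simp: S_eq indicator_def)
  ultimately have "(\<integral>x. f (R x) * indicator S x - c * indicator S x \<partial>M) = 0"
    by (simp add: left_diff_distrib cong: Bochner_Integration.integral_cong flip: of_real_mult of_real_diff)
  moreover have "integrable M (indicator S :: 'a \<Rightarrow> real)"
    by (simp add: integrable_real_indicator less_top[symmetric])
  ultimately show ?thesis
    using integrable_real_mult_indicator[OF _ f_int, of S]
    by (subst (asm) Bochner_Integration.integral_diff) (auto simp: mult.commute c_def)
qed

lemma (in prob_space) integral_indicator_eq_if_char_factorizes: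
  fixes R :: "'a \<Rightarrow> real" and V :: "nat \<Rightarrow> 'a \<Rightarrow> real" and f :: "real \<Rightarrow> real"
  assumes [measurable]: "R \<in> borel_measurable M" "f \<in> borel_measurable borel"
    and V: "\<And>j. j < d \<Longrightarrow> V j \<in> borel_measurable M"
    and char: "\<And>s t. expectation (\<lambda>x. iexp (s * R x + (\<Sum>j<d. t j * V j x)))
                 = expectation (\<lambda>x. iexp (s * R x)) * expectation (\<lambda>x. iexp (\<Sum>j<d. t j * V j x))"
    and f_nonneg: "\<And>y. 0 \<le> f y" and f_int: "integrable M (\<lambda>x. f (R x))"
    and S: "S \<in> sets (generated_sigma M V d)"
  shows "(\<integral>x. f (R x) * indicator S x \<partial>M) = expectation (\<lambda>x. f (R x)) * prob S"
proof -
  define c where "c = expectation (\<lambda>x. f (R x))"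
  have "0 \<le> c" unfolding c_def using f_nonneg by auto
  \<comment> \<open>Both sides are finite measures in S; they agree on the rectangles, hence on the
    generated sigma-algebra.\<close>
  define N1 where "N1 = density M (\<lambda>x. ennreal (f (R x)))"
  define N2 where "N2 = density M (\<lambda>x. ennreal c)"
  have N1: "emeasure N1 S = ennreal (\<integral>x. f (R x) * indicator S x \<partial>M)" if [measurable]: "S \<in> sets M" for S
    unfolding N1_def using f_nonneg integrable_real_mult_indicator[OF that f_int]
    by (subst emeasure_density) (auto intro!: nn_integral_eq_integral simp: mult.commute indicator_mult_ennreal)
  have N2: "emeasure N2 S = ennreal (c * prob S)" if "S \<in> sets M" for S
    unfolding N2_def using that \<open>0 \<le> c\<close>
    by (simp add: emeasure_density nn_integral_cmult_indicator emeasure_eq_measure ennreal_mult)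
  have rect_sets: "rectangles M V d \<subseteq> sets M" by (rule rectangles_subset_sets[where V=V and d=d, OF V])
  have S_sets: "S \<in> sigma_sets (space M) (rectangles M V d)" "S \<in> sets M"
    using sets_generated_sigma_subset_sigma_rectangles[OF S] sets.sigma_sets_subset[OF rect_sets] by auto
  have "emeasure N1 S = emeasure N2 S"
  proof (rule emeasure_eq_on_sigma_sets_generator[OF _ _ _ Int_stable_rectangles])
    show "finite_measure N1" "finite_measure N2"
      using N1[of "space M"] N2[of "space M"] by (auto intro!: finite_measureI simp: N1_def N2_def)
    show "sets N1 = sets N2" "rectangles M V d \<subseteq> sets N1" "space N1 \<in> rectangles M V d"
      "S \<in> sigma_sets (space N1) (rectangles M V d)"
      using rect_sets space_in_rectangles S_sets by (simp_all add: N1_def N2_def)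
    fix A assume "A \<in> rectangles M V d"
    then show "emeasure N1 A = emeasure N2 A"
      using rect_sets N1 N2 integral_indicator_rectangle_eq_if_char_factorizes[OF _ _ V char f_int]
      by (auto simp: c_def)
  qed
  moreover have "0 \<le> (\<integral>x. f (R x) * indicator S x \<partial>M)"
    using f_nonneg by (auto intro!: integral_nonneg_AE)
  ultimately show ?thesis
    using \<open>0 \<le> c\<close> N1[OF S_sets(2)] N2[OF S_sets(2)] by (simp add: c_def)
qed

lemma (in prob_space) real_cond_exp_eq_expectation_if_char_factorizes:
  fixes R :: "'a \<Rightarrow> real" and V :: "nat \<Rightarrow> 'a \<Rightarrow> real" and f :: "real \<Rightarrow> real"
  assumes [measurable]: "R \<in> borel_measurable M" "f \<in> borel_measurable borel"
    and V: "\<And>j. j < d \<Longrightarrow> V j \<in> borel_measurable M"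
    and char: "\<And>s t. expectation (\<lambda>x. iexp (s * R x + (\<Sum>j<d. t j * V j x)))
                 = expectation (\<lambda>x. iexp (s * R x)) * expectation (\<lambda>x. iexp (\<Sum>j<d. t j * V j x))"
    and f_nonneg: "\<And>y. 0 \<le> f y" and f_int: "integrable M (\<lambda>x. f (R x))"
  shows "AE x in M. real_cond_exp M (generated_sigma M V d) (\<lambda>x. f (R x)) x = expectation (\<lambda>x. f (R x))"
proof -
  interpret sigma_finite_subalgebra M "generated_sigma M V d"
    by (rule sigma_finite_subalgebra_generated_sigma[OF V])
  show ?thesis
  proof (rule real_cond_exp_charact)
    fix S assume S: "S \<in> sets (generated_sigma M V d)"
    then have [measurable]: "S \<in> sets M"
      using subalg by (auto simp: subalgebra_def)
    show "(\<integral>x\<in>S. f (R x) \<partial>M) = (\<integral>x\<in>S. expectation (\<lambda>x. f (R x)) \<partial>M)"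
      using integral_indicator_eq_if_char_factorizes[OF _ _ V char f_nonneg f_int S]
      by (simp add: set_lebesgue_integral_def mult.commute)
  qed (use f_int in auto)
qed

section \<open>Centred Gaussian random variables\<close>

lemma normal_density_mult_exp:
  assumes "0 < \<sigma>"
  shows "normal_density 0 \<sigma> x * exp (\<theta> * x) = exp (\<theta>\<^sup>2 * \<sigma>\<^sup>2 / 2) * normal_density (\<theta> * \<sigma>\<^sup>2) \<sigma> x"
proof -
  have "- x\<^sup>2 / (2 * \<sigma>\<^sup>2) + \<theta> * x = \<theta>\<^sup>2 * \<sigma>\<^sup>2 / 2 + (- (x - \<theta> * \<sigma>\<^sup>2)\<^sup>2 / (2 * \<sigma>\<^sup>2))"
    using assms by (simp add: field_simps power2_eq_square)
  then show ?thesis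
    unfolding normal_density_def by (simp add: exp_add[symmetric] mult.commute mult.left_commute)
qed

lemma (in prob_space) centered_gaussian_rvE:
  fixes Y :: "'a \<Rightarrow> real"
  assumes "gaussian_rv M Y" "integrable M Y" "expectation Y = 0"
  obtains (degenerate) "AE x in M. Y x = 0"
    | (normal) \<sigma> where "0 < \<sigma>" "distributed M lborel Y (normal_density 0 \<sigma>)"
proof -
  have [measurable]: "Y \<in> borel_measurable M" using assms(1) by (simp add: gaussian_rv_def)
  consider c where "AE x in M. Y x = c"
    | \<mu> \<sigma> where "0 < \<sigma>" "distributed M lborel Y (normal_density \<mu> \<sigma>)"
    using assms(1) unfolding gaussian_rv_def by blast
  then show ?thesis
  proof cases
    case (1 c)
    then have "expectation Y = c"
      using integral_cong_AE[of Y M "\<lambda>_. c"] prob_space by simp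
    then show ?thesis using 1 assms(3) degenerate by simp
  next
    case (2 \<mu> \<sigma>)
    then have "expectation Y = \<mu>" by (rule normal_distributed_expectation)
    then show ?thesis using 2 assms(3) normal by simp
  qed
qed

lemma (in prob_space) centered_gaussian_rv_char:
  fixes Y :: "'a \<Rightarrow> real"
  assumes "gaussian_rv M Y" "integrable M Y" "expectation Y = 0"
  shows "expectation (\<lambda>x. iexp (Y x)) = exp (- expectation (\<lambda>x. (Y x)\<^sup>2) / 2)"
proof -
  have [measurable]: "Y \<in> borel_measurable M" using assms(1) by (simp add: gaussian_rv_def)
  from assms show ?thesis
  proof (cases rule: centered_gaussian_rvE)
    case degenerate
    have "expectation (\<lambda>x. iexp (Y x)) = expectation (\<lambda>x. 1)"
      by (rule integral_cong_AE) (use degenerate in auto)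
    moreover have "expectation (\<lambda>x. (Y x)\<^sup>2) = expectation (\<lambda>x. 0)"
      by (rule integral_cong_AE) (use degenerate in auto)
    ultimately show ?thesis by (simp add: prob_space)
  next
    case (normal \<sigma>)
    have "distributed M lborel (\<lambda>x. (Y x - 0) / \<sigma>) std_normal_density"
      using normal_standard_normal_convert[OF normal(1)] normal(2) by simp
    then have "distr M lborel (\<lambda>x. Y x / \<sigma>) = std_normal_distribution"
      by (simp add: distributed_def)
    then have "char (distr M lborel (\<lambda>x. Y x / \<sigma>)) \<sigma> = exp (- \<sigma>\<^sup>2 / 2)"
      by (simp add: char_std_normal_distribution)
    moreover have "char (distr M lborel (\<lambda>x. Y x / \<sigma>)) \<sigma> = expectation (\<lambda>x. iexp (Y x))"
      unfolding char_def using normal(1) by (subst integral_distr) auto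
    moreover have "expectation (\<lambda>x. (Y x)\<^sup>2) = \<sigma>\<^sup>2"
      using normal_distributed_variance[OF normal] assms(3) by simp
    ultimately show ?thesis by simp
  qed
qed

lemma (in prob_space) centered_gaussian_rv_mgf:
  fixes Y :: "'a \<Rightarrow> real"
  assumes "gaussian_rv M Y" "integrable M Y" "expectation Y = 0"
  shows "integrable M (\<lambda>x. exp (\<theta> * Y x))"
    and "expectation (\<lambda>x. exp (\<theta> * Y x)) = exp (\<theta>\<^sup>2 * expectation (\<lambda>x. (Y x)\<^sup>2) / 2)"
proof -
  have [measurable]: "Y \<in> borel_measurable M" using assms(1) by (simp add: gaussian_rv_def)
  from assms have "integrable M (\<lambda>x. exp (\<theta> * Y x)) \<and>
    expectation (\<lambda>x. exp (\<theta> * Y x)) = exp (\<theta>\<^sup>2 * expectation (\<lambda>x. (Y x)\<^sup>2) / 2)"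
  proof (cases rule: centered_gaussian_rvE)
    case degenerate
    have e: "AE x in M. 1 = exp (\<theta> * Y x)" and s: "AE x in M. (Y x)\<^sup>2 = 0"
      using degenerate by (rule eventually_mono; simp)+
    have "integrable M (\<lambda>x. exp (\<theta> * Y x))"
      by (rule integrable_cong_AE_imp[OF integrable_const _ e]) measurable
    moreover have "expectation (\<lambda>x. exp (\<theta> * Y x)) = 1"
      using integral_cong_AE[OF _ _ e] prob_space by simp
    moreover have "expectation (\<lambda>x. (Y x)\<^sup>2) = 0"
      using integral_cong_AE[OF _ _ s] by simp
    ultimately show ?thesis by simp
  next
    case (normal \<sigma>)
    note tilted = normal_density_mult_exp[OF normal(1)]
    have "integrable lborel (\<lambda>x. normal_density 0 \<sigma> x * exp (\<theta> * x))"
      unfolding tilted using integrable_normal_density[OF normal(1)] by simp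
    then have "integrable M (\<lambda>x. exp (\<theta> * Y x))"
      using distributed_integrable[OF normal(2), of "\<lambda>x. exp (\<theta> * x)"] by simp
    moreover have "expectation (\<lambda>x. exp (\<theta> * Y x)) = (\<integral>x. normal_density 0 \<sigma> x * exp (\<theta> * x) \<partial>lborel)"
      using distributed_integral[OF normal(2), of "\<lambda>x. exp (\<theta> * x)"] by simp
    moreover have "\<dots> = exp (\<theta>\<^sup>2 * \<sigma>\<^sup>2 / 2)"
      unfolding tilted using integral_normal_density[OF normal(1)] by simp
    moreover have "expectation (\<lambda>x. (Y x)\<^sup>2) = \<sigma>\<^sup>2"
      using normal_distributed_variance[OF normal] assms(3) by simp
    ultimately show ?thesis by simp
  qed
  then show "integrable M (\<lambda>x. exp (\<theta> * Y x))"
    and "expectation (\<lambda>x. exp (\<theta> * Y x)) = exp (\<theta>\<^sup>2 * expectation (\<lambda>x. (Y x)\<^sup>2) / 2)"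
    by auto
qed

section \<open>Orthogonal projections for positive semidefinite forms\<close>

locale psd_bilinear_form =
  fixes ip :: "('b \<Rightarrow> real) \<Rightarrow> ('b \<Rightarrow> real) \<Rightarrow> real"
  assumes lin: "\<And>a b x y z. ip (\<lambda>t. a * x t + b * y t) z = a * ip x z + b * ip y z"
    and sym: "\<And>x y. ip x y = ip y x"
    and psd: "\<And>x. 0 \<le> ip x x"
begin

lemma scale_left: "ip (\<lambda>t. a * x t) z = a * ip x z"
  using lin[of a x 0 x z] by simp

lemma add_left: "ip (\<lambda>t. x t + y t) z = ip x z + ip y z"
  using lin[of 1 x 1 y z] by simp

lemma add_right: "ip z (\<lambda>t. x t + y t) = ip z x + ip z y"
  using add_left[of x y z] by (simp add: sym)

lemma sum_left: "finite J \<Longrightarrow> ip (\<lambda>t. \<Sum>j\<in>J. a j * v j t) z = (\<Sum>j\<in>J. a j * ip (v j) z)"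
proof (induction J rule: finite_induct)
  case empty
  then show ?case using scale_left[of 0 z z] by simp
next
  case (insert j J)
  then show ?case
    using add_left[of "\<lambda>t. a j * v j t" "\<lambda>t. \<Sum>i\<in>J. a i * v i t" z] scale_left by simp
qed

lemma sum_right: "finite J \<Longrightarrow> ip z (\<lambda>t. \<Sum>j\<in>J. a j * v j t) = (\<Sum>j\<in>J. a j * ip z (v j))"
  using sum_left[of J a v z] by (simp add: sym)

lemma self_add_orthogonal:
  assumes "ip x y = 0"
  shows "ip (\<lambda>t. x t + y t) (\<lambda>t. x t + y t) = ip x x + ip y y"
  using add_left[of x y] sym[of "\<lambda>t. x t + y t"] assms sym[of x y] by simp

lemma orthogonal_if_null:
  assumes "ip w w = 0"
  shows "ip r w = 0"
proof (rule ccontr)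
  assume "ip r w \<noteq> 0"
  define l where "l = - (ip r r + 1) / (2 * ip r w)"
  have "ip (\<lambda>t. r t + l * w t) (\<lambda>t. r t + l * w t) = ip r r + 2 * l * ip r w + l\<^sup>2 * ip w w"
    using lin[of 1 r l w] sym[of _ "\<lambda>t. r t + l * w t"] sym[of w r]
    by (simp add: power2_eq_square algebra_simps)
  also have "\<dots> = -1"
    using \<open>ip r w \<noteq> 0\<close> assms by (simp add: l_def field_simps)
  finally show False using psd[of "\<lambda>t. r t + l * w t"] by simp
qed

lemma orthogonal_projection_exists:
  fixes N :: nat
  shows "\<exists>a. \<forall>i<N. ip (\<lambda>t. x t - (\<Sum>j<N. a j * v j t)) (v i) = 0"
proof (induction N arbitrary: x)
  case 0
  then show ?case by simp
next
  case (Suc N)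
  \<comment> \<open>Gram--Schmidt step: correct the projection of x by the component along the
    part w of v N that is orthogonal to v 0, ..., v (N - 1).\<close>
  obtain a where a: "\<And>i. i < N \<Longrightarrow> ip (\<lambda>t. x t - (\<Sum>j<N. a j * v j t)) (v i) = 0"
    using Suc.IH by blast
  obtain b where b: "\<And>i. i < N \<Longrightarrow> ip (\<lambda>t. v N t - (\<Sum>j<N. b j * v j t)) (v i) = 0"
    using Suc.IH by blast
  define r where "r t = x t - (\<Sum>j<N. a j * v j t)" for t
  define w where "w t = v N t - (\<Sum>j<N. b j * v j t)" for t
  define \<kappa> where "\<kappa> = (if ip w w = 0 then 0 else ip r w / ip w w)"
  define a' where "a' j = (if j = N then \<kappa> else a j - \<kappa> * b j)" for j
  have expand: "(\<Sum>j<Suc N. a' j * v j t) = (\<Sum>j<N. a j * v j t) - \<kappa> * (\<Sum>j<N. b j * v j t) + \<kappa> * v N t" for t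
    by (simp add: a'_def algebra_simps sum_subtractf sum_distrib_left)
  have residual: "(\<lambda>t. x t - (\<Sum>j<Suc N. a' j * v j t)) = (\<lambda>t. 1 * r t + (- \<kappa>) * w t)"
    unfolding expand by (simp add: r_def w_def algebra_simps)
  have orth_v: "ip (\<lambda>t. 1 * r t + (- \<kappa>) * w t) (v i) = 0" if "i < N" for i
    using a[OF that] b[OF that] lin[of 1 r "- \<kappa>" w "v i"] by (simp add: r_def[abs_def] w_def[abs_def])
  have orth_w: "ip (\<lambda>t. 1 * r t + (- \<kappa>) * w t) w = 0"
    using orthogonal_if_null[of w] lin[of 1 r "- \<kappa>" w w] by (auto simp: \<kappa>_def)
  have "v N = (\<lambda>t. w t + (\<Sum>j<N. b j * v j t))" by (simp add: w_def)
  then have "ip (\<lambda>t. 1 * r t + (- \<kappa>) * w t) (v N)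
      = ip (\<lambda>t. 1 * r t + (- \<kappa>) * w t) w + (\<Sum>j<N. b j * ip (\<lambda>t. 1 * r t + (- \<kappa>) * w t) (v j))"
    by (simp add: add_right sum_right)
  then have "ip (\<lambda>t. 1 * r t + (- \<kappa>) * w t) (v N) = 0"
    using orth_v orth_w by simp
  with orth_v have "\<forall>i<Suc N. ip (\<lambda>t. x t - (\<Sum>j<Suc N. a' j * v j t)) (v i) = 0"
    unfolding residual by (auto simp: less_Suc_eq)
  then show ?case by blast
qed

end

section \<open>Gaussian conditioning for fractional Brownian motion\<close>

definition lincomb :: "(real \<Rightarrow> 'a \<Rightarrow> real) \<Rightarrow> real set \<Rightarrow> (real \<Rightarrow> real) \<Rightarrow> 'a \<Rightarrow> real" where
  "lincomb B I c x = (\<Sum>t\<in>I. c t * B t x)"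

lemma lincomb_linear:
  "lincomb B I (\<lambda>t. a * c t + b * d t) x = a * lincomb B I c x + b * lincomb B I d x"
  by (simp add: lincomb_def sum.distrib sum_distrib_left algebra_simps)

lemma lincomb_sum:
  "lincomb B I (\<lambda>t. \<Sum>j\<in>J. a j * c j t) x = (\<Sum>j\<in>J. a j * lincomb B I (c j) x)"
  unfolding lincomb_def by (simp add: sum_distrib_left sum_distrib_right ac_simps sum.swap[of _ I])

lemma lincomb_indicator_singleton:
  assumes "finite I" "p \<in> I"
  shows "lincomb B I (indicator {p}) x = B p x"
  using assms by (simp add: lincomb_def indicator_def if_distrib cong: if_cong)

lemma lincomb_sum_indicator_singleton:
  assumes "finite I" "\<And>j. j < d \<Longrightarrow> g j \<in> I"
  shows "lincomb B I (\<lambda>t. \<Sum>j<d. a j * indicator {g j} t) x = (\<Sum>j<d. a j * B (g j) x)"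
  using assms by (simp add: lincomb_sum lincomb_indicator_singleton)

locale fbm_process =
  fixes M :: "'a measure" and H :: real and B :: "real \<Rightarrow> 'a \<Rightarrow> real"
  assumes fbm: "fbm M H B"
begin

sublocale prob_space M
  using fbm by (simp add: fbm_def)

lemma B_measurable[measurable]: "t \<in> {0..1} \<Longrightarrow> B t \<in> borel_measurable M"
  using fbm by (simp add: fbm_def)

lemma B_integrable: "t \<in> {0..1} \<Longrightarrow> integrable M (B t)"
  and expectation_B: "t \<in> {0..1} \<Longrightarrow> expectation (B t) = 0"
  using fbm by (auto simp: fbm_def)

lemma B_mult_integrable: "s \<in> {0..1} \<Longrightarrow> t \<in> {0..1} \<Longrightarrow> integrable M (\<lambda>x. B s x * B t x)"
  and covariance_B: "s \<in> {0..1} \<Longrightarrow> t \<in> {0..1} \<Longrightarrow> expectation (\<lambda>x. B s x * B t x) =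
     (\<bar>s\<bar> powr (2*H) + \<bar>t\<bar> powr (2*H) - \<bar>s - t\<bar> powr (2*H)) / 2"
  using fbm by (auto simp: fbm_def)

context
  fixes I :: "real set"
  assumes I: "finite I" "I \<subseteq> {0..1}"
begin

lemma lincomb_measurable[measurable]: "lincomb B I c \<in> borel_measurable M"
  using I unfolding lincomb_def[abs_def] by (auto intro!: borel_measurable_sum)

lemma lincomb_integrable: "integrable M (lincomb B I c)"
  using I unfolding lincomb_def[abs_def]
  by (intro Bochner_Integration.integrable_sum Bochner_Integration.integrable_mult_right)
     (auto intro!: B_integrable)

lemma expectation_lincomb: "expectation (lincomb B I c) = 0"
  using I unfolding lincomb_def[abs_def]
  by (subst Bochner_Integration.integral_sum) (auto simp: B_integrable expectation_B subsetD intro!: sum.neutral)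

lemma lincomb_mult_integrable: "integrable M (\<lambda>x. lincomb B I c x * lincomb B I d x)"
proof -
  have "(\<lambda>x. lincomb B I c x * lincomb B I d x) = (\<lambda>x. \<Sum>t\<in>I. \<Sum>u\<in>I. c t * d u * (B t x * B u x))"
    by (auto simp: lincomb_def sum_product algebra_simps)
  moreover have "integrable M (\<lambda>x. \<Sum>t\<in>I. \<Sum>u\<in>I. c t * d u * (B t x * B u x))"
    using I by (intro Bochner_Integration.integrable_sum Bochner_Integration.integrable_mult_right)
      (auto intro!: B_mult_integrable)
  ultimately show ?thesis by simp
qed

lemma gaussian_rv_lincomb: "gaussian_rv M (lincomb B I c)"
  using fbm I unfolding fbm_def by (simp add: lincomb_def[abs_def])

definition cov :: "(real \<Rightarrow> real) \<Rightarrow> (real \<Rightarrow> real) \<Rightarrow> real" where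
  "cov c d = expectation (\<lambda>x. lincomb B I c x * lincomb B I d x)"

lemma cov_psd_bilinear_form: "psd_bilinear_form cov"
proof
  fix a b :: real and x y z :: "real \<Rightarrow> real"
  show "cov (\<lambda>t. a * x t + b * y t) z = a * cov x z + b * cov y z"
    unfolding cov_def lincomb_linear using lincomb_mult_integrable
    by (simp add: distrib_right mult.assoc)
qed (auto simp: cov_def mult.commute)

interpretation cov: psd_bilinear_form cov
  by (rule cov_psd_bilinear_form)

lemma char_lincomb: "expectation (\<lambda>x. iexp (lincomb B I c x)) = exp (- cov c c / 2)"
  using centered_gaussian_rv_char[OF gaussian_rv_lincomb lincomb_integrable expectation_lincomb]
  by (simp add: cov_def power2_eq_square)

lemma mgf_lincomb:
  shows "integrable M (\<lambda>x. exp (\<theta> * lincomb B I c x))"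
    and "expectation (\<lambda>x. exp (\<theta> * lincomb B I c x)) = exp (\<theta>\<^sup>2 * cov c c / 2)"
  using centered_gaussian_rv_mgf[OF gaussian_rv_lincomb lincomb_integrable expectation_lincomb]
  by (simp_all add: cov_def power2_eq_square)

lemma real_cond_exp_lincomb_orthogonal:
  fixes f :: "real \<Rightarrow> real"
  assumes g: "\<And>j. j < d \<Longrightarrow> g j \<in> I"
    and orth: "\<And>j. j < d \<Longrightarrow> cov r (indicator {g j}) = 0"
    and [measurable]: "f \<in> borel_measurable borel"
    and f_nonneg: "\<And>y. 0 \<le> f y" and f_int: "integrable M (\<lambda>x. f (lincomb B I r x))"
  shows "AE x in M. real_cond_exp M (generated_sigma M (\<lambda>j. B (g j)) d) (\<lambda>x. f (lincomb B I r x)) x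
           = expectation (\<lambda>x. f (lincomb B I r x))"
proof (rule real_cond_exp_eq_expectation_if_char_factorizes[OF _ _ _ _ f_nonneg f_int])
  show "B (g j) \<in> borel_measurable M" if "j < d" for j
    using g[OF that] I by auto
  fix s t
  define q :: "real \<Rightarrow> real" where "q u = (\<Sum>j<d. t j * indicator {g j} u)" for u
  have "cov (\<lambda>u. s * r u) q = s * (\<Sum>j<d. t j * cov r (indicator {g j}))"
    unfolding q_def[abs_def] by (simp only: cov.scale_left cov.sum_right finite_lessThan)
  then have "cov (\<lambda>u. s * r u) q = 0"
    using orth by simp
  then have "cov (\<lambda>u. s * r u + q u) (\<lambda>u. s * r u + q u) = cov (\<lambda>u. s * r u) (\<lambda>u. s * r u) + cov q q"
    by (rule cov.self_add_orthogonal)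
  moreover have q: "(\<Sum>j<d. t j * B (g j) x) = lincomb B I q x" for x
    unfolding q_def[abs_def] by (rule lincomb_sum_indicator_singleton[OF I(1) g, symmetric])
  moreover have "s * lincomb B I r x + lincomb B I q x = lincomb B I (\<lambda>u. s * r u + q u) x"
    "s * lincomb B I r x = lincomb B I (\<lambda>u. s * r u) x" for x
    using lincomb_linear[of B I s r 1 q x] lincomb_linear[of B I s r 0 q x] by simp_all
  ultimately show "expectation (\<lambda>x. iexp (s * lincomb B I r x + (\<Sum>j<d. t j * B (g j) x)))
      = expectation (\<lambda>x. iexp (s * lincomb B I r x)) * expectation (\<lambda>x. iexp (\<Sum>j<d. t j * B (g j) x))"
    by (simp add: char_lincomb flip: of_real_mult exp_add; simp add: field_simps)
qed simp_all

context
  fixes d :: nat and g :: "nat \<Rightarrow> real"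
  assumes g: "\<And>j. j < d \<Longrightarrow> g j \<in> I"
begin

lemma B_grid_measurable: "j < d \<Longrightarrow> B (g j) \<in> borel_measurable M"
  using g I(2) B_measurable by blast

interpretation grid: sigma_finite_subalgebra M "generated_sigma M (\<lambda>j. B (g j)) d"
  using B_grid_measurable by (rule sigma_finite_subalgebra_generated_sigma)

lemma real_cond_exp_lincomb_orthogonal_eq_0:
  assumes orth: "\<And>j. j < d \<Longrightarrow> cov r (indicator {g j}) = 0"
  shows "AE x in M. real_cond_exp M (generated_sigma M (\<lambda>j. B (g j)) d) (lincomb B I r) x = 0"
proof -
  define pos where "pos x = max (lincomb B I r x) 0" for x
  define neg where "neg x = max (- lincomb B I r x) 0" for x
  have int: "integrable M pos" "integrable M neg"
    using lincomb_integrable[of r] by (auto simp: pos_def[abs_def] neg_def[abs_def])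
  have split: "lincomb B I r = (\<lambda>x. pos x - neg x)"
    by (auto simp: pos_def neg_def max_def)
  have centered: "expectation pos - expectation neg = 0"
    using expectation_lincomb[of r] int by (simp add: split flip: Bochner_Integration.integral_diff)
  have "AE x in M. real_cond_exp M (generated_sigma M (\<lambda>j. B (g j)) d) pos x = expectation pos"
    "AE x in M. real_cond_exp M (generated_sigma M (\<lambda>j. B (g j)) d) neg x = expectation neg"
    using int unfolding pos_def neg_def by (auto intro!: real_cond_exp_lincomb_orthogonal[OF g orth])
  with grid.real_cond_exp_diff[OF int] show ?thesis
    unfolding split by eventually_elim (use centered in simp)
qed

lemma grid_orthogonal_decomposition:
  obtains r a where "\<And>j. j < d \<Longrightarrow> cov r (indicator {g j}) = 0" and "cov r r \<le> cov c c"
    and "lincomb B I c = (\<lambda>x. (\<Sum>j<d. a j * B (g j) x) + lincomb B I r x)"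
proof -
  obtain a where a: "\<forall>i<d. cov (\<lambda>t. c t - (\<Sum>j<d. a j * indicator {g j} t)) (indicator {g i}) = 0"
    using cov.orthogonal_projection_exists[where N=d and x=c and v="\<lambda>j. indicator {g j}"] ..
  define p where "p t = (\<Sum>j<d. a j * indicator {g j} t)" for t
  define r where "r t = c t - p t" for t
  have orth: "cov r (indicator {g j}) = 0" if "j < d" for j
    using a that by (simp only: r_def[abs_def] p_def[abs_def] simp_thms)
  have c_split: "c = (\<lambda>t. p t + r t)" by (simp add: r_def)
  have "cov p r = (\<Sum>j<d. a j * cov r (indicator {g j}))"
    unfolding p_def[abs_def] by (simp only: cov.sum_left finite_lessThan cov.sym[of r])
  then have "cov c c = cov p p + cov r r"
    using orth unfolding c_split by (intro cov.self_add_orthogonal) simp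
  then have "cov r r \<le> cov c c"
    using cov.psd[of p] by simp
  moreover have "lincomb B I p x = (\<Sum>j<d. a j * B (g j) x)" for x
    unfolding p_def[abs_def] by (rule lincomb_sum_indicator_singleton[OF I(1) g])
  then have "lincomb B I c = (\<lambda>x. (\<Sum>j<d. a j * B (g j) x) + lincomb B I r x)"
    using lincomb_linear[of B I 1 p 1 r] by (simp add: c_split fun_eq_iff)
  ultimately show thesis
    using orth that by blast
qed

lemma gaussian_conditioning:
  obtains \<sigma>2 P where "0 \<le> \<sigma>2" "\<sigma>2 \<le> cov c c"
    and "AE x in M. real_cond_exp M (generated_sigma M (\<lambda>j. B (g j)) d) (lincomb B I c) x = P x"
    and "\<And>\<theta>. AE x in M. real_cond_exp M (generated_sigma M (\<lambda>j. B (g j)) d)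
                          (\<lambda>x. exp (\<theta> * lincomb B I c x)) x = exp (\<theta> * P x) * exp (\<theta>\<^sup>2 * \<sigma>2 / 2)"
proof (rule grid_orthogonal_decomposition)
  let ?F = "generated_sigma M (\<lambda>j. B (g j)) d"
  fix r a
  assume orth: "\<And>j. j < d \<Longrightarrow> cov r (indicator {g j}) = 0" and var: "cov r r \<le> cov c c"
    and lincomb_c: "lincomb B I c = (\<lambda>x. (\<Sum>j<d. a j * B (g j) x) + lincomb B I r x)"
  \<comment> \<open>The projection P is ?F-measurable, and the remainder lincomb B I r is independent of ?F.\<close>
  define P where "P x = (\<Sum>j<d. a j * B (g j) x)" for x
  have P_meas: "P \<in> borel_measurable ?F"
    unfolding P_def[abs_def] by (intro borel_measurable_sum borel_measurable_times borel_measurable_const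
        measurable_generated_sigma[where V="\<lambda>j. B (g j)"]) auto
  have "P = (\<lambda>x. lincomb B I c x - lincomb B I r x)"
    by (simp add: lincomb_c P_def[abs_def])
  then have P_int: "integrable M P"
    using lincomb_integrable by simp
  show thesis
  proof (rule that[of "cov r r" P])
    show "0 \<le> cov r r" "cov r r \<le> cov c c" using cov.psd[of r] var by simp_all
    have "AE x in M. real_cond_exp M ?F (lincomb B I r) x = 0"
      using orth by (rule real_cond_exp_lincomb_orthogonal_eq_0)
    moreover have "AE x in M. real_cond_exp M ?F P x = P x"
      by (rule grid.real_cond_exp_F_meas[OF P_int P_meas])
    moreover note grid.real_cond_exp_add[OF P_int lincomb_integrable[of r]]
    ultimately show "AE x in M. real_cond_exp M ?F (lincomb B I c) x = P x"
      unfolding lincomb_c P_def[symmetric] by eventually_elim simp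
    fix \<theta>
    have "(\<lambda>x. exp (\<theta> * P x)) \<in> borel_measurable ?F"
      using P_meas by measurable
    moreover have "integrable M (\<lambda>x. exp (\<theta> * P x) * exp (\<theta> * lincomb B I r x))"
      using mgf_lincomb(1)[of \<theta> c] by (simp add: lincomb_c P_def distrib_left exp_add)
    ultimately have "AE x in M. real_cond_exp M ?F (\<lambda>x. exp (\<theta> * P x) * exp (\<theta> * lincomb B I r x)) x
        = exp (\<theta> * P x) * real_cond_exp M ?F (\<lambda>x. exp (\<theta> * lincomb B I r x)) x"
      by (intro grid.real_cond_exp_mult) auto
    moreover have "AE x in M. real_cond_exp M ?F (\<lambda>x. exp (\<theta> * lincomb B I r x)) x = exp (\<theta>\<^sup>2 * cov r r / 2)"
      using real_cond_exp_lincomb_orthogonal[OF g, where r=r and f="\<lambda>y. exp (\<theta> * y)"] orth mgf_lincomb[of \<theta> r]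
      by simp
    ultimately show "AE x in M. real_cond_exp M ?F (\<lambda>x. exp (\<theta> * lincomb B I c x)) x
        = exp (\<theta> * P x) * exp (\<theta>\<^sup>2 * cov r r / 2)"
      unfolding lincomb_c P_def[symmetric] by eventually_elim (simp add: distrib_left exp_add)
  qed
qed

end

end

end

section \<open>The normalising constants\<close>

lemma summable_dyadic_gaussian_tail:
  fixes c \<delta> :: real
  assumes "0 < c" "0 < \<delta>"
  shows "summable (\<lambda>p::nat. 2 ^ p * exp (- c * 2 powr (2 * real p * \<delta>)))"
proof -
  have "((\<lambda>x::real. 4 powr x * exp (- c * 2 powr (2 * x * \<delta>))) \<longlongrightarrow> 0) at_top"
    using assms by real_asymp
  then have "(\<lambda>p::nat. 4 powr real p * exp (- c * 2 powr (2 * real p * \<delta>))) \<longlonglongrightarrow> 0"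
    by (rule filterlim_compose[OF _ filterlim_real_sequentially])
  then have "eventually (\<lambda>p::nat. 4 powr real p * exp (- c * 2 powr (2 * real p * \<delta>)) < 1) sequentially"
    by (rule order_tendstoD) simp
  then have "eventually (\<lambda>p::nat. norm (2 ^ p * exp (- c * 2 powr (2 * real p * \<delta>))) \<le> (1/2) ^ p) sequentially"
  proof eventually_elim
    case (elim p)
    have "(4::real) powr real p = 2 ^ p * 2 ^ p"
      by (simp add: powr_realpow power_mult_distrib[symmetric])
    with elim show ?case by (simp add: field_simps power_one_over)
  qed
  then show ?thesis
    by (rule summable_comparison_test_ev) (simp add: summable_geometric)
qed

lemma
  assumes "0 < \<rho>" "0 < \<delta>"
  shows Zn_pos: "0 < Zn \<rho> \<delta> n"
    and Zn_le_1: "Nstar \<rho> \<delta> \<le> n \<Longrightarrow> Zn \<rho> \<delta> n \<le> 1"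
proof -
  define f where "f p = 2 ^ p * exp (- (\<rho>\<^sup>2/8) * 2 powr (2 * real p * \<delta>))" for p :: nat
  have "summable f" unfolding f_def using assms by (intro summable_dyadic_gaussian_tail) auto
  have Zn_eq: "Zn \<rho> \<delta> k = (\<Sum>i. f (i + Suc k))" for k
    unfolding Zn_def zterm_def f_def by (simp add: add.commute)
  have tail_summable: "summable (\<lambda>i. f (i + k))" for k
    using \<open>summable f\<close> by (subst summable_iff_shift)
  show "0 < Zn \<rho> \<delta> n"
    unfolding Zn_eq by (rule suminf_pos[OF tail_summable]) (simp add: f_def)
  \<comment> \<open>The tails of a convergent series tend to 0, so Z_k > 1 for finitely many k only
    and the supremum in Nstar is attained.\<close>
  obtain K where K: "\<And>k. k \<ge> K \<Longrightarrow> norm (\<Sum>i. f (i + k)) < 1"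
    using suminf_exist_split[OF zero_less_one \<open>summable f\<close>] by blast
  have "{k. 1 \<le> k \<and> Zn \<rho> \<delta> k > 1} \<subseteq> {..<K}"
  proof
    fix k assume k: "k \<in> {k. 1 \<le> k \<and> Zn \<rho> \<delta> k > 1}"
    show "k \<in> {..<K}"
    proof (rule ccontr)
      assume "k \<notin> {..<K}"
      then have "norm (Zn \<rho> \<delta> k) < 1" unfolding Zn_eq by (intro K) simp
      with k show False by simp
    qed
  qed
  then have "finite {k. 1 \<le> k \<and> Zn \<rho> \<delta> k > 1}"
    by (rule finite_subset) simp
  moreover assume "Nstar \<rho> \<delta> \<le> n"
  ultimately show "Zn \<rho> \<delta> n \<le> 1"
    using le_cSup_finite[of "{k. 1 \<le> k \<and> Zn \<rho> \<delta> k > 1}" n] by (force simp: Nstar_def)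
qed

lemma inverse_gn_mult:
  assumes "0 < Zn \<rho> \<delta> n"
  shows "inverse (gn \<rho> \<delta> n m) * 2 ^ (n+m) = Zn \<rho> \<delta> n * exp (\<rho>\<^sup>2 / 8 * 2 powr (2 * real (n+m) * \<delta>))"
  using assms unfolding gn_def zterm_def by (simp add: field_simps exp_minus)

lemma theta_plus_mult_ell:
  "theta_plus H \<delta> \<rho> n m * ell H \<delta> (n+m) = \<rho> / 2 * 2 powr (2 * real (n+m) * \<delta>)"
proof -
  have "2 powr (real (n+m) * (H + \<delta>)) * 2 powr (- (H - \<delta>) * real (n+m)) = 2 powr (2 * real (n+m) * \<delta>)"
    by (simp add: powr_add[symmetric] algebra_simps)
  then show ?thesis unfolding theta_plus_def ell_def by (simp add: mult.assoc)
qed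

lemma theta_plus_sq_mult:
  "(theta_plus H \<delta> \<rho> n m)\<^sup>2 * 2 powr (- 2 * H * real (n+m)) = \<rho>\<^sup>2 / 4 * 2 powr (2 * real (n+m) * \<delta>)"
proof -
  have "(2 powr (real (n+m) * (H + \<delta>)))\<^sup>2 * 2 powr (- 2 * H * real (n+m)) = 2 powr (2 * real (n+m) * \<delta>)"
    by (simp add: powr_add[symmetric] powr_realpow[symmetric] powr_powr algebra_simps power2_eq_square)
  then show ?thesis unfolding theta_plus_def by (simp add: power_mult_distrib power_divide mult.assoc)
qed

lemma tilted_weight_le_1:
  fixes X p \<sigma>2 \<theta> :: real
  assumes \<rho>: "0 < \<rho>" and Z: "0 < Zn \<rho> \<delta> n" "Zn \<rho> \<delta> n \<le> 1"
    and \<theta>: "\<bar>\<theta>\<bar> = theta_plus H \<delta> \<rho> n m"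
    and p: "\<bar>p\<bar> \<le> \<rho> / 2 * ell H \<delta> (n+m)"
    and \<sigma>2: "0 \<le> \<sigma>2" "\<sigma>2 \<le> 2 powr (- 2 * H * real (n+m))"
    and X: "\<bar>\<theta>\<bar> * (\<rho> * ell H \<delta> (n+m)) < \<theta> * X"
  shows "inverse (gn \<rho> \<delta> n m) * 2 ^ (n+m) * exp (- \<theta> * X + ln (exp (\<theta> * p) * exp (\<theta>\<^sup>2 * \<sigma>2 / 2))) \<le> 1"
proof -
  define Y where "Y = 2 powr (2 * real (n+m) * \<delta>)"
  \<comment> \<open>Drift, variance and event contribute rho^2 Y / 4, rho^2 Y / 8 and less than -rho^2 Y / 2
    to the exponent; the total -rho^2 Y / 8 cancels the normalisation g^-1 2^(n+m).\<close>
  have scale: "\<bar>\<theta>\<bar> * ell H \<delta> (n+m) = \<rho> / 2 * Y"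
    using theta_plus_mult_ell by (simp add: \<theta> Y_def)
  have "\<theta> * p \<le> \<bar>\<theta>\<bar> * \<bar>p\<bar>" by (metis abs_ge_self abs_mult)
  also have "\<dots> \<le> \<bar>\<theta>\<bar> * (\<rho> / 2 * ell H \<delta> (n+m))" using p by (rule mult_left_mono) simp
  also have "\<dots> = \<rho>\<^sup>2 / 4 * Y" using scale by (simp add: power2_eq_square)
  finally have drift: "\<theta> * p \<le> \<rho>\<^sup>2 / 4 * Y" .
  have "\<theta>\<^sup>2 = (theta_plus H \<delta> \<rho> n m)\<^sup>2"
    using \<theta> by (metis power2_abs)
  then have variance: "\<theta>\<^sup>2 * \<sigma>2 \<le> \<rho>\<^sup>2 / 4 * Y"
    using mult_left_mono[OF \<sigma>2(2), of "\<theta>\<^sup>2"] theta_plus_sq_mult[of H \<delta> \<rho> n m]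
    by (simp add: Y_def)
  have "\<bar>\<theta>\<bar> * (\<rho> * ell H \<delta> (n+m)) = \<rho> * (\<bar>\<theta>\<bar> * ell H \<delta> (n+m))"
    by (simp only: ac_simps)
  also have "\<dots> = \<rho>\<^sup>2 / 2 * Y" by (simp add: scale power2_eq_square)
  finally have event: "\<rho>\<^sup>2 / 2 * Y < \<theta> * X" using X by simp
  have "- \<theta> * X + ln (exp (\<theta> * p) * exp (\<theta>\<^sup>2 * \<sigma>2 / 2)) = - \<theta> * X + \<theta> * p + \<theta>\<^sup>2 * \<sigma>2 / 2"
    by (simp add: ln_mult)
  also have "\<dots> \<le> - (\<rho>\<^sup>2 / 8 * Y)"
    using drift variance event by simp
  finally have "- \<theta> * X + ln (exp (\<theta> * p) * exp (\<theta>\<^sup>2 * \<sigma>2 / 2)) \<le> - (\<rho>\<^sup>2 / 8 * Y)" .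
  then have "Zn \<rho> \<delta> n * exp (\<rho>\<^sup>2 / 8 * Y + (- \<theta> * X + ln (exp (\<theta> * p) * exp (\<theta>\<^sup>2 * \<sigma>2 / 2)))) \<le> 1"
    using Z by (intro mult_le_one) auto
  then show ?thesis
    using inverse_gn_mult[OF Z(1)] by (simp add: Y_def exp_add mult.assoc)
qed

section \<open>Dyadic second differences\<close>

lemma tgrid_in_unit_interval:
  assumes "i \<le> 2 ^ N"
  shows "tgrid N i \<in> {0..1}"
proof -
  have "real i \<le> 2 ^ N" using assms by (metis of_nat_le_iff of_nat_numeral of_nat_power)
  then show ?thesis by (simp add: tgrid_def)
qed

lemma tgrid_refine: "tgrid n j = tgrid (n + m) (j * 2 ^ m)"
  by (simp add: tgrid_def power_add)

lemma gridF_eq_generated_sigma: "gridF M B n = generated_sigma M (\<lambda>j. B (tgrid n j)) (Suc (2 ^ n))"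
  unfolding gridF_def by (simp add: less_Suc_eq_le)

lemma tgrid_second_difference_points:
  assumes "1 \<le> k" "2 * k \<le> 2 ^ N"
  shows "tgrid N (2*k-2) \<in> {0..1}" "tgrid N (2*k-1) \<in> {0..1}" "tgrid N (2*k) \<in> {0..1}"
  using assms by (intro tgrid_in_unit_interval; linarith)+

definition dyadic_grid :: "nat \<Rightarrow> real set" where
  "dyadic_grid N = tgrid N ` {..2 ^ N}"

definition second_difference :: "nat \<Rightarrow> nat \<Rightarrow> real \<Rightarrow> real" where
  "second_difference N k t = indicator {tgrid N (2*k-2)} t / 2 - indicator {tgrid N (2*k-1)} t
     + indicator {tgrid N (2*k)} t / 2"

lemma finite_dyadic_grid: "finite (dyadic_grid N)"
  by (simp add: dyadic_grid_def)

lemma dyadic_grid_subset_unit_interval: "dyadic_grid N \<subseteq> {0..1}"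
  unfolding dyadic_grid_def by (auto intro!: image_subsetI tgrid_in_unit_interval simp del: atLeastAtMost_iff)

lemma tgrid_in_refined_dyadic_grid:
  assumes "j \<le> 2 ^ n"
  shows "tgrid n j \<in> dyadic_grid (n + m)"
proof -
  have "j * 2 ^ m \<le> 2 ^ (n + m)" using assms by (simp add: power_add)
  then show ?thesis by (auto simp: dyadic_grid_def tgrid_refine[of n j m])
qed

lemma lincomb_second_difference:
  assumes "2 * k \<le> 2 ^ (n+m)"
  shows "lincomb B (dyadic_grid (n+m)) (second_difference (n+m) k) = balpha B n m k"
proof -
  let ?I = "dyadic_grid (n+m)"
  have points: "tgrid (n+m) (2*k-2) \<in> ?I" "tgrid (n+m) (2*k-1) \<in> ?I" "tgrid (n+m) (2*k) \<in> ?I"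
    using assms by (auto simp: dyadic_grid_def)
  have expand: "lincomb B ?I (second_difference (n+m) k) x = lincomb B ?I (indicator {tgrid (n+m) (2*k-2)}) x / 2
      - lincomb B ?I (indicator {tgrid (n+m) (2*k-1)}) x + lincomb B ?I (indicator {tgrid (n+m) (2*k)}) x / 2" for x
    unfolding lincomb_def second_difference_def
    by (simp add: sum.distrib sum_subtractf sum_divide_distrib left_diff_distrib distrib_right del: indicator_simps)
  show ?thesis
    unfolding fun_eq_iff expand lincomb_indicator_singleton[OF finite_dyadic_grid points(1)]
      lincomb_indicator_singleton[OF finite_dyadic_grid points(2)]
      lincomb_indicator_singleton[OF finite_dyadic_grid points(3)]
    by (simp add: balpha_def)
qed

context fbm_process
begin

lemma sigma_finite_subalgebra_gridF: "sigma_finite_subalgebra M (gridF M B n)"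
  unfolding gridF_eq_generated_sigma
  by (rule sigma_finite_subalgebra_generated_sigma) (auto intro!: B_measurable tgrid_in_unit_interval)

lemma expectation_second_difference_sq:
  assumes "u \<in> {0..1}" "v \<in> {0..1}" "w \<in> {0..1}"
  shows "expectation (\<lambda>x. (B u x / 2 - B v x + B w x / 2)\<^sup>2)
    = \<bar>u - v\<bar> powr (2*H) / 2 + \<bar>v - w\<bar> powr (2*H) / 2 - \<bar>u - w\<bar> powr (2*H) / 4"
proof -
  have "(\<lambda>x. (B u x / 2 - B v x + B w x / 2)\<^sup>2) = (\<lambda>x. B u x * B u x / 4 + B v x * B v x + B w x * B w x / 4
      - B u x * B v x - B v x * B w x + B u x * B w x / 2)"
    by (auto simp: power2_eq_square algebra_simps)
  then have "expectation (\<lambda>x. (B u x / 2 - B v x + B w x / 2)\<^sup>2)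
    = expectation (\<lambda>x. B u x * B u x) / 4 + expectation (\<lambda>x. B v x * B v x)
      + expectation (\<lambda>x. B w x * B w x) / 4 - expectation (\<lambda>x. B u x * B v x)
      - expectation (\<lambda>x. B v x * B w x) + expectation (\<lambda>x. B u x * B w x) / 2"
    using assms B_mult_integrable[of u u] B_mult_integrable[of v v] B_mult_integrable[of w w]
      B_mult_integrable[of u v] B_mult_integrable[of v w] B_mult_integrable[of u w]
    by simp
  then show ?thesis
    using assms by (simp add: covariance_B abs_minus_commute field_simps)
qed

lemma expectation_balpha_sq_le:
  assumes k: "1 \<le> k" "2 * k \<le> 2 ^ (n+m)"
  shows "expectation (\<lambda>x. (balpha B n m k x)\<^sup>2) \<le> 2 powr (- 2 * H * real (n+m))"
proof -
  define N where "N = n + m"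
  define h :: real where "h = 1 / 2 ^ N"
  note points = tgrid_second_difference_points[OF k[folded N_def]]
  have dist: "\<bar>tgrid N (2*k-2) - tgrid N (2*k-1)\<bar> = h" "\<bar>tgrid N (2*k-1) - tgrid N (2*k)\<bar> = h"
    "\<bar>tgrid N (2*k-2) - tgrid N (2*k)\<bar> = 2 * h"
    using k(1) by (auto simp: tgrid_def h_def of_nat_diff diff_divide_distrib[symmetric])
  have "expectation (\<lambda>x. (B (tgrid N (2*k-2)) x / 2 - B (tgrid N (2*k-1)) x + B (tgrid N (2*k)) x / 2)\<^sup>2)
      = h powr (2*H) / 2 + h powr (2*H) / 2 - (2 * h) powr (2*H) / 4"
    using expectation_second_difference_sq[OF points] unfolding dist .
  then have "expectation (\<lambda>x. (balpha B n m k x)\<^sup>2) = h powr (2*H) - (2 * h) powr (2*H) / 4"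
    by (simp add: balpha_def N_def)
  also have "\<dots> \<le> h powr (2*H)" by simp
  also have "\<dots> = 2 powr (- 2 * H * real (n+m))"
    by (simp add: h_def N_def powr_minus_divide powr_divide powr_powr ac_simps flip: powr_realpow)
  finally show ?thesis .
qed

lemma mu_ae_eq_real_cond_exp_balpha:
  assumes k: "1 \<le> k" "2 * k \<le> 2 ^ (n+m)"
  shows "AE x in M. mu M B n m k x = real_cond_exp M (gridF M B n) (balpha B n m k) x"
proof -
  interpret sigma_finite_subalgebra M "gridF M B n"
    by (rule sigma_finite_subalgebra_gridF)
  define a where "a = B (tgrid (n+m) (2*k-2))"
  define b where "b = B (tgrid (n+m) (2*k-1))"
  define c where "c = B (tgrid (n+m) (2*k))"
  have int: "integrable M a" "integrable M b" "integrable M c"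
    using tgrid_second_difference_points[OF k] by (auto simp: a_def b_def c_def B_integrable)
  have "balpha B n m k = (\<lambda>x. ((1/2) * a x - b x) + (1/2) * c x)"
    by (auto simp: balpha_def a_def b_def c_def)
  moreover have "AE x in M. real_cond_exp M (gridF M B n) (\<lambda>x. ((1/2) * a x - b x) + (1/2) * c x) x
      = real_cond_exp M (gridF M B n) (\<lambda>x. (1/2) * a x - b x) x + real_cond_exp M (gridF M B n) (\<lambda>x. (1/2) * c x) x"
    "AE x in M. real_cond_exp M (gridF M B n) (\<lambda>x. (1/2) * a x - b x) x
      = real_cond_exp M (gridF M B n) (\<lambda>x. (1/2) * a x) x - real_cond_exp M (gridF M B n) b x"
    using int by (auto intro!: real_cond_exp_add real_cond_exp_diff)
  moreover have "AE x in M. real_cond_exp M (gridF M B n) (\<lambda>x. (1/2) * a x) x = (1/2) * real_cond_exp M (gridF M B n) a x"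
    "AE x in M. real_cond_exp M (gridF M B n) (\<lambda>x. (1/2) * c x) x = (1/2) * real_cond_exp M (gridF M B n) c x"
    using real_cond_exp_cmult[OF int(1), of "1/2"] real_cond_exp_cmult[OF int(3), of "1/2"] by simp_all
  ultimately show ?thesis
    by (auto simp: mu_def a_def b_def c_def elim!: eventually_elim2)
qed

lemma balpha_conditionally_gaussian:
  assumes m: "1 \<le> m" and k: "1 \<le> k" "k \<le> 2 ^ (n+m-1)"
  obtains p \<sigma>2 where "0 \<le> \<sigma>2" "\<sigma>2 \<le> 2 powr (- 2 * H * real (n+m))"
    and "AE x in M. mu M B n m k x = p x"
    and "\<And>\<theta>. AE x in M. Xi M B n m k \<theta> x = exp (\<theta> * p x) * exp (\<theta>\<^sup>2 * \<sigma>2 / 2)"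
proof -
  let ?I = "dyadic_grid (n+m)" and ?c = "second_difference (n+m) k"
  have k2: "2 * k \<le> 2 ^ (n+m)"
    using k m by (cases "n+m") auto
  note I = finite_dyadic_grid[of "n+m"] dyadic_grid_subset_unit_interval[of "n+m"]
  have grid: "tgrid n j \<in> ?I" if "j < Suc (2 ^ n)" for j
    using that by (intro tgrid_in_refined_dyadic_grid) simp
  have "cov ?I ?c ?c = expectation (\<lambda>x. (balpha B n m k x)\<^sup>2)"
    by (simp add: cov_def[OF I] lincomb_second_difference[OF k2] power2_eq_square)
  then have var: "cov ?I ?c ?c \<le> 2 powr (- 2 * H * real (n+m))"
    using expectation_balpha_sq_le[OF k(1) k2] by simp
  show thesis
  proof (rule gaussian_conditioning[where d="Suc (2 ^ n)" and g="tgrid n" and c="?c", OF I grid])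
    fix \<sigma>2 P
    assume \<sigma>2: "0 \<le> \<sigma>2" "\<sigma>2 \<le> cov ?I ?c ?c"
      and ce: "AE x in M. real_cond_exp M (generated_sigma M (\<lambda>j. B (tgrid n j)) (Suc (2 ^ n)))
                  (lincomb B ?I ?c) x = P x"
      and ce_exp: "\<And>\<theta>. AE x in M. real_cond_exp M (generated_sigma M (\<lambda>j. B (tgrid n j)) (Suc (2 ^ n)))
                  (\<lambda>x. exp (\<theta> * lincomb B ?I ?c x)) x = exp (\<theta> * P x) * exp (\<theta>\<^sup>2 * \<sigma>2 / 2)"
    show thesis
    proof (rule that[of \<sigma>2 P])
      show "0 \<le> \<sigma>2" "\<sigma>2 \<le> 2 powr (- 2 * H * real (n+m))" using \<sigma>2 var by simp_all
      show "AE x in M. mu M B n m k x = P x"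
        using mu_ae_eq_real_cond_exp_balpha[OF k(1) k2] ce
        unfolding lincomb_second_difference[OF k2] gridF_eq_generated_sigma by eventually_elim simp
      fix \<theta>
      show "AE x in M. Xi M B n m k \<theta> x = exp (\<theta> * P x) * exp (\<theta>\<^sup>2 * \<sigma>2 / 2)"
        using ce_exp[of \<theta>] by (simp add: Xi_def lincomb_second_difference[OF k2] gridF_eq_generated_sigma)
    qed
  qed
qed

lemma Theta_bounds_ae:
  assumes \<rho>: "0 < \<rho>" and Z: "0 < Zn \<rho> \<delta> n" "Zn \<rho> \<delta> n \<le> 1"
    and mk: "1 \<le> m" "1 \<le> k" "k \<le> 2 ^ (n+m-1)"
  shows "AE \<omega> in M. BCE M B H \<delta> \<rho> n \<omega> \<longrightarrow>
    Theta M B \<rho> \<delta> n m k (theta_plus H \<delta> \<rho> n m) \<omega>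
      * (if balpha B n m k \<omega> > \<rho> * ell H \<delta> (n+m) then 1 else 0) \<le> 1 \<and>
    Theta M B \<rho> \<delta> n m k (theta_minus H \<delta> \<rho> n m) \<omega>
      * (if balpha B n m k \<omega> < - \<rho> * ell H \<delta> (n+m) then 1 else 0) \<le> 1"
proof (rule balpha_conditionally_gaussian[OF mk])
  fix \<sigma>2 p
  assume \<sigma>2: "0 \<le> \<sigma>2" "\<sigma>2 \<le> 2 powr (- 2 * H * real (n+m))"
    and mu: "AE x in M. mu M B n m k x = p x"
    and Xi: "\<And>\<theta>. AE x in M. Xi M B n m k \<theta> x = exp (\<theta> * p x) * exp (\<theta>\<^sup>2 * \<sigma>2 / 2)"
  define \<theta> where "\<theta> = theta_plus H \<delta> \<rho> n m"
  have \<theta>_pos: "0 < \<theta>" using \<rho> by (simp add: \<theta>_def theta_plus_def)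
  note bound = tilted_weight_le_1[OF \<rho> Z _ _ \<sigma>2]
  from mu Xi[of \<theta>] Xi[of "- \<theta>"] show ?thesis
  proof eventually_elim
    case (elim \<omega>)
    let ?X = "balpha B n m k \<omega>" and ?l = "ell H \<delta> (n+m)"
    show ?case
    proof (intro impI conjI)
      assume "BCE M B H \<delta> \<rho> n \<omega>"
      then have "\<bar>mu M B n m k \<omega>\<bar> \<le> \<rho> / 2 * ?l" using mk unfolding BCE_def by blast
      then have p: "\<bar>p \<omega>\<bar> \<le> \<rho> / 2 * ?l" using elim by simp
      have "\<bar>\<theta>\<bar> * (\<rho> * ?l) < \<theta> * ?X" if "?X > \<rho> * ?l"
        using that \<theta>_pos by simp
      then show "Theta M B \<rho> \<delta> n m k (theta_plus H \<delta> \<rho> n m) \<omega> * (if ?X > \<rho> * ?l then 1 else 0) \<le> 1"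
        using bound[where \<theta>=\<theta> and p="p \<omega>" and X="?X"] \<theta>_pos p elim by (auto simp: Theta_def \<theta>_def)
      have "\<bar>- \<theta>\<bar> * (\<rho> * ?l) < - \<theta> * ?X" if "?X < - \<rho> * ?l"
        using mult_strict_left_mono[of "\<rho> * ?l" "- ?X" \<theta>] that \<theta>_pos by simp
      then show "Theta M B \<rho> \<delta> n m k (theta_minus H \<delta> \<rho> n m) \<omega> * (if ?X < - \<rho> * ?l then 1 else 0) \<le> 1"
        using bound[where \<theta>="- \<theta>" and p="p \<omega>" and X="?X"] \<theta>_pos p elim by (auto simp: Theta_def \<theta>_def theta_minus_def)
    qed
  qed
qed

end

theorem lemma5:
  fixes M :: "'a measure" and B :: "real \<Rightarrow> 'a \<Rightarrow> real"
    and H \<delta> \<rho> :: real and n :: nat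
  assumes "0 < H" "H < 1" "0 < \<delta>" "\<delta> < H" "0 < \<rho>"
    and "fbm M H B"
    and "n \<ge> Nstar \<rho> \<delta>"
  shows "AE \<omega> in M. BCE M B H \<delta> \<rho> n \<omega> \<longrightarrow>
    (\<forall>m k. 1 \<le> m \<longrightarrow> 1 \<le> k \<longrightarrow> k \<le> 2 ^ (n+m-1) \<longrightarrow>
       Theta M B \<rho> \<delta> n m k (theta_plus H \<delta> \<rho> n m) \<omega>
          * (if balpha B n m k \<omega> > \<rho> * ell H \<delta> (n+m) then 1 else 0) \<le> 1 \<and>
       Theta M B \<rho> \<delta> n m k (theta_minus H \<delta> \<rho> n m) \<omega>
          * (if balpha B n m k \<omega> < - \<rho> * ell H \<delta> (n+m) then 1 else 0) \<le> 1)"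
proof -
  interpret fbm_process M H B by unfold_locales (rule assms(6))
  have Z: "0 < Zn \<rho> \<delta> n" "Zn \<rho> \<delta> n \<le> 1"
    using Zn_pos Zn_le_1 assms(3,5,7) by auto
  have "AE \<omega> in M. \<forall>m k. 1 \<le> m \<longrightarrow> 1 \<le> k \<longrightarrow> k \<le> 2 ^ (n+m-1) \<longrightarrow> BCE M B H \<delta> \<rho> n \<omega> \<longrightarrow>
       Theta M B \<rho> \<delta> n m k (theta_plus H \<delta> \<rho> n m) \<omega>
          * (if balpha B n m k \<omega> > \<rho> * ell H \<delta> (n+m) then 1 else 0) \<le> 1 \<and>
       Theta M B \<rho> \<delta> n m k (theta_minus H \<delta> \<rho> n m) \<omega>
          * (if balpha B n m k \<omega> < - \<rho> * ell H \<delta> (n+m) then 1 else 0) \<le> 1"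
    using Theta_bounds_ae[OF assms(5) Z] by (simp add: AE_all_countable)
  then show ?thesis
    by (rule eventually_mono) blast
qed

end
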